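(* There are continuum many pairwise-incomparable (with respect to inclusion) modal clones with respect to $\mathbf{K}$. Consequently, not every modal clone with respect to $\mathbf{K}$ is finitely generated.
   Context: Modal formulas: $\phi::=x\mid\neg\phi\mid\phi\land\psi\mid\phi\lor\psi\mid\Diamond\phi\mid\Box\phi$ over a countably infinite set of variables. $\mathbf{K}$ is the minimal normal modal logic. The Lindenbaum–Tarski algebra of $\mathbf{K}$ has universe $A_{\mathbf{K}}=\{[\phi]\mid\phi \text{ a modal formula}\}$ where $[\phi]$ is the class of formulas $\psi$ with $\mathbf{K}\vdash\phi\leftrightarrow\psi$, with operations $\land,\lor,\neg,\top,\bot,\Diamond$ induced by the connectives. A clone over a set $A$ is a set of finitary operations $A^n\to A$ ($n\ge1$) containing all projections and closed under composition; the clone generated by a set of operations is the smallest clone containing it (constants being treated as constant unary operations). A modal clone with respect to $\mathbf{K}$ is any clone over $A_{\mathbf{K}}$ contained in the clone generated by the operations of the Lindenbaum–Tarski algebra of $\mathbf{K}$. A clone is finitely generated if it is the clone generated by a finite set of operations. *)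

theory Defs
  imports Main "HOL-Library.FuncSet" "HOL-Library.Equipollence"
begin

datatype form = Var nat | Neg form | And form form | Or form form | Dia form | Box form

definition Imp :: "form \<Rightarrow> form \<Rightarrow> form" where
  "Imp a b = Or (Neg a) b"

definition Iff :: "form \<Rightarrow> form \<Rightarrow> form" where
  "Iff a b = And (Imp a b) (Imp b a)"

definition Top :: form where "Top = Or (Var 0) (Neg (Var 0))"
definition Bot :: form where "Bot = And (Var 0) (Neg (Var 0))"

text \<open>Propositional evaluation, treating modal subformulas as atoms.\<close>
fun peval :: "(form \<Rightarrow> bool) \<Rightarrow> form \<Rightarrow> bool" where
  "peval v (Var n) = v (Var n)"
| "peval v (Neg a) = (\<not> peval v a)"
| "peval v (And a b) = (peval v a \<and> peval v b)"
| "peval v (Or a b) = (peval v a \<or> peval v b)"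
| "peval v (Dia a) = v (Dia a)"
| "peval v (Box a) = v (Box a)"

definition taut :: "form \<Rightarrow> bool" where
  "taut \<phi> \<longleftrightarrow> (\<forall>v. peval v \<phi>)"

text \<open>The minimal normal modal logic K (Hilbert style; axioms schematic,
  hence closed under uniform substitution).\<close>
inductive Kprov :: "form \<Rightarrow> bool" where
  taut: "taut \<phi> \<Longrightarrow> Kprov \<phi>"
| axK: "Kprov (Imp (Box (Imp \<phi> \<psi>)) (Imp (Box \<phi>) (Box \<psi>)))"
| dual: "Kprov (Iff (Dia \<phi>) (Neg (Box (Neg \<phi>))))"
| mp: "Kprov (Imp \<phi> \<psi>) \<Longrightarrow> Kprov \<phi> \<Longrightarrow> Kprov \<psi>"
| nec: "Kprov \<phi> \<Longrightarrow> Kprov (Box \<phi>)"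

definition kclass :: "form \<Rightarrow> form set" where
  "kclass \<phi> = {\<psi>. Kprov (Iff \<phi> \<psi>)}"

definition A_K :: "form set set" where
  "A_K = range kclass"

definition rep :: "form set \<Rightarrow> form" where
  "rep X = (SOME \<phi>. X = kclass \<phi>)"

text \<open>An n-ary operation on A is represented as a pair (n, f) with
  f an extensional function from A^n (tuples indexed by {..<n}) to A.\<close>
type_synonym 'a op = "nat \<times> ((nat \<Rightarrow> 'a) \<Rightarrow> 'a)"

definition tuples :: "'a set \<Rightarrow> nat \<Rightarrow> (nat \<Rightarrow> 'a) set" where
  "tuples A n = (\<Pi>\<^sub>E i\<in>{..<n}. A)"

definition ops :: "'a set \<Rightarrow> 'a op set" where
  "ops A = {(n, f). n \<ge> 1 \<and> f \<in> tuples A n \<rightarrow>\<^sub>E A}"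

definition mk_op :: "'a set \<Rightarrow> nat \<Rightarrow> ((nat \<Rightarrow> 'a) \<Rightarrow> 'a) \<Rightarrow> 'a op" where
  "mk_op A n f = (n, restrict f (tuples A n))"

definition proj :: "'a set \<Rightarrow> nat \<Rightarrow> nat \<Rightarrow> 'a op" where
  "proj A n i = mk_op A n (\<lambda>x. x i)"

definition comp_op :: "'a set \<Rightarrow> nat \<Rightarrow> 'a op \<Rightarrow> (nat \<Rightarrow> 'a op) \<Rightarrow> 'a op" where
  "comp_op A m F G = mk_op A m (\<lambda>x. snd F (restrict (\<lambda>i. snd (G i) x) {..<fst F}))"

definition is_clone :: "'a set \<Rightarrow> 'a op set \<Rightarrow> bool" where
  "is_clone A C \<longleftrightarrow>
     C \<subseteq> ops A
   \<and> (\<forall>n i. 1 \<le> n \<and> i < n \<longrightarrow> proj A n i \<in> C)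
   \<and> (\<forall>F G m. F \<in> C \<and> m \<ge> 1 \<and> (\<forall>i < fst F. G i \<in> C \<and> fst (G i) = m)
        \<longrightarrow> comp_op A m F G \<in> C)"

definition gen_clone :: "'a set \<Rightarrow> 'a op set \<Rightarrow> 'a op set" where
  "gen_clone A F = \<Inter>{C. is_clone A C \<and> F \<subseteq> C}"

definition finitely_generated :: "'a set \<Rightarrow> 'a op set \<Rightarrow> bool" where
  "finitely_generated A C \<longleftrightarrow> (\<exists>F. finite F \<and> F \<subseteq> ops A \<and> C = gen_clone A F)"

text \<open>Constants are treated as constant unary operations.\<close>
definition const_op :: "'a set \<Rightarrow> 'a \<Rightarrow> 'a op" where
  "const_op A c = mk_op A 1 (\<lambda>_. c)"

definition LT_ops :: "form set op set" where
  "LT_ops = {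
     mk_op A_K 2 (\<lambda>x. kclass (And (rep (x 0)) (rep (x 1)))),
     mk_op A_K 2 (\<lambda>x. kclass (Or (rep (x 0)) (rep (x 1)))),
     mk_op A_K 1 (\<lambda>x. kclass (Neg (rep (x 0)))),
     mk_op A_K 1 (\<lambda>x. kclass (Dia (rep (x 0)))),
     const_op A_K (kclass Top),
     const_op A_K (kclass Bot)}"

definition modal_clone :: "form set op set \<Rightarrow> bool" where
  "modal_clone C \<longleftrightarrow> is_clone A_K C \<and> C \<subseteq> gen_clone A_K LT_ops"

end

theory Submission
  imports Defs
begin

text \<open>The classes \<open>[\<diamond>\<^sup>i \<top>]\<close> are term-definable constants of the Lindenbaum--Tarski algebra
  of K, and they are pairwise distinct: in the Kripke frame on the naturals where each
  \<open>w > 0\<close> sees only \<open>w - 1\<close>, the formula \<open>\<diamond>\<^sup>i \<top>\<close> holds exactly at the worlds \<open>w \<ge> i\<close>.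
  A clone generated by constants from a set \<open>V\<close> consists of projections and constants
  from \<open>V\<close> only. Hence the clone generated by \<open>{[\<diamond>\<^sup>i \<top>] | i \<in> T}\<close> contains the
  constant \<open>[\<diamond>\<^sup>j \<top>]\<close> iff \<open>j \<in> T\<close>, so \<open>T \<mapsto>\<close> this clone is an order embedding of
  the subsets of \<open>\<nat>\<close> into the modal clones. The antichain
  \<open>X \<mapsto> {2i | i \<in> X} \<union> {2i+1 | i \<notin> X}\<close> of subsets of \<open>\<nat>\<close> then yields continuum
  many incomparable modal clones, and \<open>T = \<nat>\<close> yields one that is not finitely generated,
  because finitely many generators mention only finitely many constants.\<close>

lemma fst_mk_op [simp]: "fst (mk_op A n f) = n"
  by (simp add: mk_op_def)

lemma snd_mk_op: "x \<in> tuples A n \<Longrightarrow> snd (mk_op A n f) x = f x"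
  by (simp add: mk_op_def)

lemma mk_op_cong: "(\<And>x. x \<in> tuples A n \<Longrightarrow> f x = g x) \<Longrightarrow> mk_op A n f = mk_op A n g"
  unfolding mk_op_def by (metis restrict_ext)

lemma mk_op_in_ops: "1 \<le> n \<Longrightarrow> (\<And>x. x \<in> tuples A n \<Longrightarrow> f x \<in> A) \<Longrightarrow> mk_op A n f \<in> ops A"
  by (auto simp: mk_op_def ops_def)

lemma mk_op_fst_snd: "g \<in> ops A \<Longrightarrow> mk_op A (fst g) (snd g) = g"
  by (auto simp: ops_def mk_op_def PiE_iff extensional_restrict)

lemma ops_apply_in: "g \<in> ops A \<Longrightarrow> x \<in> tuples A (fst g) \<Longrightarrow> snd g x \<in> A"
  by (auto simp: ops_def)

lemma const_tuple_in_tuples: "a \<in> A \<Longrightarrow> restrict (\<lambda>_. a) {..<n} \<in> tuples A n"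
  by (simp add: tuples_def)

lemma const_op_in_ops: "c \<in> A \<Longrightarrow> const_op A c \<in> ops A"
  unfolding const_op_def by (rule mk_op_in_ops) auto

lemma const_ops_subset_ops: "V \<subseteq> A \<Longrightarrow> const_op A ` V \<subseteq> ops A"
  by (intro image_subsetI const_op_in_ops) blast

lemma proj_in_ops: "1 \<le> n \<Longrightarrow> i < n \<Longrightarrow> proj A n i \<in> ops A"
  unfolding proj_def by (rule mk_op_in_ops) (auto simp: tuples_def)

lemma comp_args_in_tuples:
  assumes "\<And>j. j < k \<Longrightarrow> G j \<in> ops A \<and> fst (G j) = m" and "x \<in> tuples A m"
  shows "restrict (\<lambda>j. snd (G j) x) {..<k} \<in> tuples A k"
proof -
  have "snd (G j) x \<in> A" if "j < k" for j
    using assms ops_apply_in[of "G j" A x] that by simp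
  then show ?thesis
    unfolding tuples_def by (simp add: restrict_PiE_iff)
qed

lemma comp_op_in_ops:
  "F \<in> ops A \<Longrightarrow> 1 \<le> m \<Longrightarrow> \<forall>i<fst F. G i \<in> ops A \<and> fst (G i) = m \<Longrightarrow> comp_op A m F G \<in> ops A"
  unfolding comp_op_def by (rule mk_op_in_ops) (auto intro!: ops_apply_in comp_args_in_tuples)

lemma comp_op_proj:
  assumes "i < n" and G: "\<forall>j<n. G j \<in> ops A \<and> fst (G j) = m"
  shows "comp_op A m (proj A n i) G = G i"
proof -
  have "comp_op A m (proj A n i) G = mk_op A m (snd (G i))"
    unfolding comp_op_def
  proof (rule mk_op_cong)
    fix x assume "x \<in> tuples A m"
    then have "restrict (\<lambda>j. snd (G j) x) {..<n} \<in> tuples A n"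
      using G by (intro comp_args_in_tuples) auto
    then show "snd (proj A n i) (restrict (\<lambda>j. snd (G j) x) {..<fst (proj A n i)}) = snd (G i) x"
      using \<open>i < n\<close> by (simp add: proj_def snd_mk_op)
  qed
  also have "\<dots> = G i"
    using mk_op_fst_snd[of "G i" A] G \<open>i < n\<close> by auto
  finally show ?thesis .
qed

lemma comp_op_const:
  assumes "\<forall>j<n. G j \<in> ops A \<and> fst (G j) = m"
  shows "comp_op A m (mk_op A n (\<lambda>_. c)) G = mk_op A m (\<lambda>_. c)"
  unfolding comp_op_def
proof (rule mk_op_cong)
  fix x assume "x \<in> tuples A m"
  then have "restrict (\<lambda>j. snd (G j) x) {..<n} \<in> tuples A n"
    using assms by (intro comp_args_in_tuples) auto
  then show "snd (mk_op A n (\<lambda>_. c)) (restrict (\<lambda>j. snd (G j) x) {..<fst (mk_op A n (\<lambda>_. c))}) = c"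
    by (simp add: snd_mk_op)
qed

lemma comp_op_unary_const_op:
  assumes "c \<in> A"
  shows "comp_op A 1 (mk_op A 1 f) (\<lambda>_. const_op A c) = const_op A (f (restrict (\<lambda>_. c) {..<1}))"
  unfolding comp_op_def const_op_def
proof (rule mk_op_cong)
  fix x assume "x \<in> tuples A 1"
  then have args: "restrict (\<lambda>j. snd (mk_op A 1 (\<lambda>_. c)) x) {..<1} = restrict (\<lambda>_. c) {..<1}"
    by (simp add: snd_mk_op)
  show "snd (mk_op A 1 f) (restrict (\<lambda>j. snd (mk_op A 1 (\<lambda>_. c)) x) {..<fst (mk_op A 1 f)})
      = f (restrict (\<lambda>_. c) {..<1})"
    unfolding fst_mk_op args by (rule snd_mk_op[OF const_tuple_in_tuples[OF assms]])
qed

lemma is_clone_projI: "is_clone A C \<Longrightarrow> 1 \<le> n \<Longrightarrow> i < n \<Longrightarrow> proj A n i \<in> C"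
  unfolding is_clone_def by blast

lemma is_clone_compI:
  "is_clone A C \<Longrightarrow> F \<in> C \<Longrightarrow> 1 \<le> m \<Longrightarrow> (\<And>i. i < fst F \<Longrightarrow> G i \<in> C \<and> fst (G i) = m)
   \<Longrightarrow> comp_op A m F G \<in> C"
  unfolding is_clone_def by blast

lemma is_clone_ops: "is_clone A (ops A)"
  unfolding is_clone_def using proj_in_ops comp_op_in_ops by blast

lemma gen_clone_least: "is_clone A C \<Longrightarrow> F \<subseteq> C \<Longrightarrow> gen_clone A F \<subseteq> C"
  unfolding gen_clone_def by blast

lemma gen_clone_superset: "F \<subseteq> gen_clone A F"
  unfolding gen_clone_def by blast

lemma is_clone_gen_clone:
  assumes "F \<subseteq> ops A"
  shows "is_clone A (gen_clone A F)"
  unfolding is_clone_def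
proof (intro conjI allI impI)
  show "gen_clone A F \<subseteq> ops A"
    by (rule gen_clone_least[OF is_clone_ops assms])
  show "proj A n i \<in> gen_clone A F" if "1 \<le> n \<and> i < n" for n i
    unfolding gen_clone_def using that by (blast intro: is_clone_projI)
  show "comp_op A m G H \<in> gen_clone A F"
    if GH: "G \<in> gen_clone A F \<and> 1 \<le> m \<and> (\<forall>i<fst G. H i \<in> gen_clone A F \<and> fst (H i) = m)"
    for G H m
    unfolding gen_clone_def
  proof
    fix C assume "C \<in> {C. is_clone A C \<and> F \<subseteq> C}"
    then have C: "is_clone A C" and "gen_clone A F \<subseteq> C"
      using gen_clone_least by auto
    then show "comp_op A m G H \<in> C"
      using GH by (intro is_clone_compI[OF C]) auto
  qed
qed

lemma gen_clone_subset_gen_clone: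
  "G \<subseteq> ops A \<Longrightarrow> F \<subseteq> gen_clone A G \<Longrightarrow> gen_clone A F \<subseteq> gen_clone A G"
  by (rule gen_clone_least[OF is_clone_gen_clone])

definition proj_const_ops :: "'a set \<Rightarrow> 'a set \<Rightarrow> 'a op set" where
  "proj_const_ops A V =
     {proj A n i | n i. 1 \<le> n \<and> i < n} \<union> {mk_op A n (\<lambda>_. c) | n c. 1 \<le> n \<and> c \<in> V}"

lemma proj_const_opsE:
  assumes "f \<in> proj_const_ops A V"
  obtains n i where "f = proj A n i" "1 \<le> n" "i < n"
    | n c where "f = mk_op A n (\<lambda>_. c)" "1 \<le> n" "c \<in> V"
  using assms unfolding proj_const_ops_def by blast

lemma proj_const_ops_subset_ops: "V \<subseteq> A \<Longrightarrow> proj_const_ops A V \<subseteq> ops A"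
  by (auto simp: proj_const_ops_def intro!: proj_in_ops mk_op_in_ops)

lemma is_clone_proj_const_ops:
  assumes V: "V \<subseteq> A"
  shows "is_clone A (proj_const_ops A V)"
  unfolding is_clone_def
proof (intro conjI allI impI)
  show "proj_const_ops A V \<subseteq> ops A"
    using V by (rule proj_const_ops_subset_ops)
  show "proj A n i \<in> proj_const_ops A V" if "1 \<le> n \<and> i < n" for n i
    using that unfolding proj_const_ops_def by blast
next
  fix F G m
  assume h: "F \<in> proj_const_ops A V \<and> 1 \<le> m \<and> (\<forall>i<fst F. G i \<in> proj_const_ops A V \<and> fst (G i) = m)"
  then have G: "\<forall>i<fst F. G i \<in> ops A \<and> fst (G i) = m"
    using proj_const_ops_subset_ops[OF V] by blast
  from h have "F \<in> proj_const_ops A V" by blast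
  then show "comp_op A m F G \<in> proj_const_ops A V"
  proof (cases rule: proj_const_opsE)
    case (1 n i)
    then show ?thesis using h G comp_op_proj[of i n G A m] by (simp add: proj_def)
  next
    case (2 n c)
    then show ?thesis using h G comp_op_const[of n G A m c] unfolding proj_const_ops_def by auto
  qed
qed

text \<open>The second element \<open>b\<close> prevents the constant from coinciding with the unary projection.\<close>

lemma const_op_in_proj_const_opsD:
  assumes "b \<in> A" "b \<noteq> c" and "const_op A c \<in> proj_const_ops A V"
  shows "c \<in> V"
proof -
  define t where "t = restrict (\<lambda>_. b) {..<1::nat}"
  have t: "t \<in> tuples A 1"
    unfolding t_def using \<open>b \<in> A\<close> by (rule const_tuple_in_tuples)
  from assms(3) show ?thesis
    unfolding const_op_def
  proof (cases rule: proj_const_opsE)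
    case (1 n i)
    have "n = 1"
      using arg_cong[where f = fst, OF 1(1)] by (simp add: proj_def)
    with 1 have "i = 0"
      by simp
    have "c = b"
      using arg_cong[where f = "\<lambda>f. snd f t", OF 1(1)] t \<open>n = 1\<close> \<open>i = 0\<close>
      by (simp add: snd_mk_op proj_def t_def)
    then show ?thesis
      using \<open>b \<noteq> c\<close> by simp
  next
    case (2 n c')
    have "n = 1"
      using arg_cong[where f = fst, OF 2(1)] by simp
    then have "c = c'"
      using arg_cong[where f = "\<lambda>f. snd f t", OF 2(1)] t by (simp add: snd_mk_op)
    then show ?thesis
      using 2 by simp
  qed
qed

lemma gen_clone_const_ops_subset: "V \<subseteq> A \<Longrightarrow> gen_clone A (const_op A ` V) \<subseteq> proj_const_ops A V"
  by (rule gen_clone_least[OF is_clone_proj_const_ops])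
    (auto simp: const_op_def proj_const_ops_def)

lemma gen_clone_const_ops_subsetD:
  assumes "a \<in> A" "b \<in> A" "a \<noteq> b" "V \<subseteq> A" "W \<subseteq> A"
    and "gen_clone A (const_op A ` V) \<subseteq> gen_clone A (const_op A ` W)"
  shows "V \<subseteq> W"
proof
  fix c assume "c \<in> V"
  then have "const_op A c \<in> gen_clone A (const_op A ` V)"
    using gen_clone_superset by blast
  then have "const_op A c \<in> proj_const_ops A W"
    using assms(6) gen_clone_const_ops_subset[OF \<open>W \<subseteq> A\<close>] by blast
  moreover obtain d where "d \<in> A" "d \<noteq> c"
    using assms(1-3) by blast
  ultimately show "c \<in> W"
    by (intro const_op_in_proj_const_opsD[of d A c W])
qed

text \<open>A generator \<open>f\<close> that is a constant is determined by its value \<open>value_at a f\<close> on the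
  constant tuple \<open>a\<close>, so a finite generating set mentions only finitely many constants.\<close>

definition value_at :: "'a \<Rightarrow> 'a op \<Rightarrow> 'a" where
  "value_at a f = snd f (restrict (\<lambda>_. a) {..<fst f})"

lemma proj_const_ops_value_at:
  assumes "a \<in> A" "F \<subseteq> proj_const_ops A V"
  shows "F \<subseteq> proj_const_ops A (value_at a ` F)"
proof
  fix f assume "f \<in> F"
  then have "f \<in> proj_const_ops A V"
    using assms(2) by blast
  then show "f \<in> proj_const_ops A (value_at a ` F)"
  proof (cases rule: proj_const_opsE)
    case (1 n i)
    then show ?thesis unfolding proj_const_ops_def by blast
  next
    case (2 n c)
    then have "value_at a f = c"
      using const_tuple_in_tuples[OF \<open>a \<in> A\<close>] by (simp add: value_at_def snd_mk_op)
    then show ?thesis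
      using 2 \<open>f \<in> F\<close> unfolding proj_const_ops_def by blast
  qed
qed

lemma not_finitely_generated_const_ops:
  assumes "infinite V" "V \<subseteq> A"
  shows "\<not> finitely_generated A (gen_clone A (const_op A ` V))"
proof
  assume "finitely_generated A (gen_clone A (const_op A ` V))"
  then obtain F where F: "finite F" "F \<subseteq> ops A" "gen_clone A (const_op A ` V) = gen_clone A F"
    unfolding finitely_generated_def by blast
  obtain a where "a \<in> A"
    using assms infinite_imp_nonempty by blast
  define W where "W = value_at a ` F"
  have "W \<subseteq> A"
    unfolding W_def value_at_def using F(2) ops_apply_in const_tuple_in_tuples[OF \<open>a \<in> A\<close>] by blast
  have "F \<subseteq> proj_const_ops A V"
    using F(3) gen_clone_superset gen_clone_const_ops_subset[OF assms(2)] by blast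
  then have "F \<subseteq> proj_const_ops A W"
    unfolding W_def by (rule proj_const_ops_value_at[OF \<open>a \<in> A\<close>])
  then have "gen_clone A (const_op A ` V) \<subseteq> proj_const_ops A W"
    unfolding F(3) by (rule gen_clone_least[OF is_clone_proj_const_ops[OF \<open>W \<subseteq> A\<close>]])
  have "V \<subseteq> W"
  proof
    fix c assume "c \<in> V"
    have "infinite (V - {c})"
      using \<open>infinite V\<close> by simp
    then obtain b where "b \<in> A" "b \<noteq> c"
      using \<open>V \<subseteq> A\<close> infinite_imp_nonempty by blast
    have "const_op A c \<in> proj_const_ops A W"
      using \<open>c \<in> V\<close> gen_clone_superset \<open>gen_clone A (const_op A ` V) \<subseteq> proj_const_ops A W\<close> by blast
    then show "c \<in> W"
      by (intro const_op_in_proj_const_opsD[of b A c W] \<open>b \<in> A\<close> \<open>b \<noteq> c\<close>)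
  qed
  then show False
    using F(1) \<open>infinite V\<close> finite_subset unfolding W_def by blast
qed

definition antichain_code :: "nat set \<Rightarrow> nat set" where
  "antichain_code X = (\<lambda>i. 2 * i) ` X \<union> (\<lambda>i. 2 * i + 1) ` (- X)"

lemma antichain_code_subset_imp_eq:
  assumes "antichain_code X \<subseteq> antichain_code Y"
  shows "X = Y"
proof -
  have even: "2 * i \<in> antichain_code Z \<longleftrightarrow> i \<in> Z" for i Z
    unfolding antichain_code_def by (auto simp: image_iff) presburger
  have odd: "2 * i + 1 \<in> antichain_code Z \<longleftrightarrow> i \<notin> Z" for i Z
    unfolding antichain_code_def by (auto simp: image_iff) presburger
  show ?thesis
    using assms even odd by blast
qed

fun sat :: "nat \<Rightarrow> form \<Rightarrow> bool" where
  "sat w (Var n) = False"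
| "sat w (Neg a) = (\<not> sat w a)"
| "sat w (And a b) = (sat w a \<and> sat w b)"
| "sat w (Or a b) = (sat w a \<or> sat w b)"
| "sat w (Dia a) = (0 < w \<and> sat (w - 1) a)"
| "sat w (Box a) = (0 < w \<longrightarrow> sat (w - 1) a)"

lemma peval_sat: "peval (sat w) \<phi> = sat w \<phi>"
  by (induction \<phi>) auto

lemma Kprov_sound: "Kprov \<phi> \<Longrightarrow> sat w \<phi>"
proof (induction arbitrary: w rule: Kprov.induct)
  case (taut \<phi>)
  then show ?case using peval_sat unfolding taut_def by metis
qed (auto simp: Imp_def Iff_def)

lemma Kprov_Iff_sat: "Kprov (Iff a b) \<Longrightarrow> sat w a = sat w b"
  using Kprov_sound[of "Iff a b" w] by (auto simp: Iff_def Imp_def)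

lemma rep_mem: "X \<in> A_K \<Longrightarrow> rep X \<in> X"
proof -
  assume "X \<in> A_K"
  then obtain \<phi> where "X = kclass \<phi>"
    unfolding A_K_def by blast
  then have "kclass (rep X) = X"
    unfolding rep_def by (metis (mono_tags) someI)
  moreover have "rep X \<in> kclass (rep X)"
    by (simp add: kclass_def Kprov.taut taut_def Iff_def Imp_def)
  ultimately show ?thesis by simp
qed

text \<open>Defined through \<open>rep\<close>, exactly as the operation \<open>\<diamond>\<close> of \<open>LT_ops\<close> acts, so that
  no congruence property of K is needed.\<close>

primrec dia_top :: "nat \<Rightarrow> form set" where
  "dia_top 0 = kclass Top"
| "dia_top (Suc i) = kclass (Dia (rep (dia_top i)))"

lemma dia_top_in_A_K: "dia_top i \<in> A_K"
  by (cases i) (auto simp: A_K_def)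

lemma image_dia_top_subset_A_K: "dia_top ` T \<subseteq> A_K"
  using dia_top_in_A_K by blast

lemma sat_rep_dia_top: "sat w (rep (dia_top i)) \<longleftrightarrow> i \<le> w"
proof (induction i arbitrary: w)
  case 0
  have "Kprov (Iff Top (rep (dia_top 0)))"
    using rep_mem[OF dia_top_in_A_K[of 0]] by (simp add: kclass_def)
  then have "sat w Top = sat w (rep (dia_top 0))"
    by (rule Kprov_Iff_sat)
  then show ?case
    by (simp add: Top_def)
next
  case (Suc i)
  have "Kprov (Iff (Dia (rep (dia_top i))) (rep (dia_top (Suc i))))"
    using rep_mem[OF dia_top_in_A_K[of "Suc i"]] by (simp add: kclass_def)
  then have "sat w (Dia (rep (dia_top i))) = sat w (rep (dia_top (Suc i)))"
    by (rule Kprov_Iff_sat)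
  then show ?case
    using Suc.IH[of "w - 1"] by auto
qed

lemma inj_dia_top: "inj dia_top"
proof (rule injI)
  fix i j assume eq: "dia_top i = dia_top j"
  have "sat i (rep (dia_top i))" "sat j (rep (dia_top j))"
    by (simp_all add: sat_rep_dia_top)
  then have "sat i (rep (dia_top j))" "sat j (rep (dia_top i))"
    unfolding eq by simp_all
  then show "i = j"
    by (simp add: sat_rep_dia_top)
qed

lemma LT_ops_subset_ops: "LT_ops \<subseteq> ops A_K"
  unfolding LT_ops_def
  by (intro insert_subsetI empty_subsetI const_op_in_ops mk_op_in_ops) (simp_all add: A_K_def)

lemma const_op_dia_top_in_gen_clone_LT_ops: "const_op A_K (dia_top i) \<in> gen_clone A_K LT_ops"
proof (induction i)
  case 0
  show ?case
    by (rule subsetD[OF gen_clone_superset]) (simp add: LT_ops_def)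
next
  case (Suc i)
  define D where "D = mk_op A_K 1 (\<lambda>x. kclass (Dia (rep (x 0))))"
  have "D \<in> gen_clone A_K LT_ops"
    unfolding D_def by (rule subsetD[OF gen_clone_superset]) (simp add: LT_ops_def)
  then have "comp_op A_K 1 D (\<lambda>_. const_op A_K (dia_top i)) \<in> gen_clone A_K LT_ops"
    using Suc.IH by (intro is_clone_compI[OF is_clone_gen_clone[OF LT_ops_subset_ops]])
      (simp_all add: D_def const_op_def)
  moreover have "comp_op A_K 1 D (\<lambda>_. const_op A_K (dia_top i)) = const_op A_K (dia_top (Suc i))"
    unfolding D_def comp_op_unary_const_op[OF dia_top_in_A_K] by simp
  ultimately show ?case
    by simp
qed

lemma modal_clone_dia_top_consts: "modal_clone (gen_clone A_K (const_op A_K ` dia_top ` T))"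
  unfolding modal_clone_def
proof
  show "is_clone A_K (gen_clone A_K (const_op A_K ` dia_top ` T))"
    by (intro is_clone_gen_clone const_ops_subset_ops image_dia_top_subset_A_K)
  show "gen_clone A_K (const_op A_K ` dia_top ` T) \<subseteq> gen_clone A_K LT_ops"
    unfolding image_image
    by (intro gen_clone_subset_gen_clone[OF LT_ops_subset_ops] image_subsetI
        const_op_dia_top_in_gen_clone_LT_ops)
qed

theorem fact4p6:
  shows "(\<exists>S. S \<approx> (UNIV :: nat set set)
            \<and> (\<forall>C\<in>S. modal_clone C)
            \<and> (\<forall>C\<in>S. \<forall>D\<in>S. C \<subseteq> D \<longrightarrow> C = D))
         \<and> (\<exists>C. modal_clone C \<and> \<not> finitely_generated A_K C)"
proof
  define clone where "clone X = gen_clone A_K (const_op A_K ` dia_top ` antichain_code X)" for X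
  have two_classes: "dia_top 0 \<in> A_K" "dia_top 1 \<in> A_K" "dia_top 0 \<noteq> dia_top 1"
    using dia_top_in_A_K inj_dia_top by (simp_all del: dia_top.simps add: inj_eq)
  have incomparable: "X = Y" if "clone X \<subseteq> clone Y" for X Y
  proof -
    have "dia_top ` antichain_code X \<subseteq> dia_top ` antichain_code Y"
      using that unfolding clone_def
      by (rule gen_clone_const_ops_subsetD[OF two_classes image_dia_top_subset_A_K
            image_dia_top_subset_A_K])
    then show "X = Y"
      by (simp add: inj_image_subset_iff[OF inj_dia_top] antichain_code_subset_imp_eq)
  qed
  then have "inj clone"
    by (intro injI) simp
  show "\<exists>S. S \<approx> (UNIV :: nat set set) \<and> (\<forall>C\<in>S. modal_clone C)
      \<and> (\<forall>C\<in>S. \<forall>D\<in>S. C \<subseteq> D \<longrightarrow> C = D)"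
  proof (intro exI conjI)
    show "range clone \<approx> (UNIV :: nat set set)"
      using \<open>inj clone\<close> by (rule inj_on_image_eqpoll_self)
    show "\<forall>C\<in>range clone. modal_clone C"
      unfolding clone_def using modal_clone_dia_top_consts by blast
    show "\<forall>C\<in>range clone. \<forall>D\<in>range clone. C \<subseteq> D \<longrightarrow> C = D"
      using incomparable by blast
  qed
  have "infinite (range dia_top)"
    using inj_dia_top by (simp add: finite_image_iff)
  then have "\<not> finitely_generated A_K (gen_clone A_K (const_op A_K ` range dia_top))"
    using image_dia_top_subset_A_K by (rule not_finitely_generated_const_ops)
  then show "\<exists>C. modal_clone C \<and> \<not> finitely_generated A_K C"
    using modal_clone_dia_top_consts by blast
qed
end
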